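(* Let $(X_n,F_n)_{n\ge1}$ be a process where each $X_n$ is an $\mathbb X$-valued random variable and each $F_n$ is a random probability measure on $\mathbb X$. Assume: (i) conditionally on the whole sequence $(F_n)_{n\ge1}$, the $X_n$ are independent and the conditional distribution of $X_n$ is $F_n$; (ii) $(F_n)_{n\ge1}$ is a measure-valued martingale with respect to its natural filtration, i.e. $\mathbb E[F_{n+1}(A)\mid F_1,\dots,F_n]=F_n(A)$ a.s. for every $n\ge1$ and $A\in\mathcal X$. Then $(X_n)_{n\ge1}$ is c.i.d. (with respect to its natural filtration).
   Context: All random elements are defined on a probability space $(\Omega,\mathcal F,\mathbb P)$; $\mathbb X$ is a Polish space with Borel $\sigma$-algebra $\mathcal X$. Spaces of probability measures carry the topology of weak convergence and the $\sigma$-algebra generated by the evaluation maps; a random probability measure is a random element of such a space. A sequence $(X_n)_{n\ge1}$ of $\mathbb X$-valued random variables adapted to a filtration $\mathcal G=(\mathcal G_n)_{n\ge0}$ is $\mathcal G$-c.i.d. (conditionally identically distributed) if $\mathbb E[f(X_{n+k})\mid\mathcal G_n]=\mathbb E[f(X_{n+1})\mid\mathcal G_n]$ a.s. for all $k\ge1$, $n\ge0$ and all bounded measurable $f:\mathbb X\to\mathbb R$; it is c.i.d. if this holds for its natural filtration $\mathcal G_n=\sigma(X_1,\dots,X_n)$, $\mathcal G_0=\{\emptyset,\Omega\}$. *)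

theory Defs
  imports "HOL-Probability.Probability"
begin

text \<open>For I = {1..n} this is the natural filtration at time n;
  for I = {} it is the trivial sigma-algebra.\<close>
definition gen_sigma :: "'b measure \<Rightarrow> 'c measure \<Rightarrow> (nat \<Rightarrow> 'b \<Rightarrow> 'c) \<Rightarrow> nat set \<Rightarrow> 'b measure" where
  "gen_sigma M N Y I = sigma (space M) {Y i -` B \<inter> space M | i B. i \<in> I \<and> B \<in> sets N}"

end

theory Submission
  imports Defs
begin

text \<open>
  Fix a cylinder event \<open>A = {X\<^sub>1 \<in> a\<^sub>1, \<dots>, X\<^sub>n \<in> a\<^sub>n}\<close> and \<open>j > n\<close>. Conditioning on the whole
  sequence \<open>F\<close> and using conditional independence gives
  \<open>P(A \<inter> {X\<^sub>j \<in> B}) = E[\<Phi> F\<^sub>j(B)]\<close> with \<open>\<Phi> = \<Prod>\<^sub>i\<^sub>\<le>\<^sub>n F\<^sub>i(a\<^sub>i)\<close>, and \<open>\<Phi>\<close> is bounded and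
  \<open>\<sigma>(F\<^sub>1, \<dots>, F\<^sub>m)\<close>-measurable for every \<open>m \<ge> n\<close>. The martingale property therefore lets
  \<open>j\<close> be lowered step by step to \<open>n + 1\<close>, so \<open>P(A \<inter> {X\<^sub>n\<^sub>+\<^sub>k \<in> B}) = P(A \<inter> {X\<^sub>n\<^sub>+\<^sub>1 \<in> B})\<close>.
  Cylinders form an intersection-stable generator of \<open>\<sigma>(X\<^sub>1, \<dots>, X\<^sub>n)\<close>, so by Dynkin's
  theorem the same holds for every \<open>A\<close> in it: the conditional laws of \<open>X\<^sub>n\<^sub>+\<^sub>k\<close> and
  \<open>X\<^sub>n\<^sub>+\<^sub>1\<close> given \<open>X\<^sub>1, \<dots>, X\<^sub>n\<close> coincide.
\<close>

lemma gen_sigma_generator_subset_Pow: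
  "{Y i -` B \<inter> space M | i B. i \<in> I \<and> B \<in> sets N} \<subseteq> Pow (space M)"
  by auto

lemma space_gen_sigma [simp]: "space (gen_sigma M N Y I) = space M"
  unfolding gen_sigma_def by (rule space_measure_of[OF gen_sigma_generator_subset_Pow])

lemma sets_gen_sigma:
  "sets (gen_sigma M N Y I) = sigma_sets (space M) {Y i -` B \<inter> space M | i B. i \<in> I \<and> B \<in> sets N}"
  unfolding gen_sigma_def by (rule sets_measure_of[OF gen_sigma_generator_subset_Pow])

lemma subalgebra_gen_sigma:
  assumes "\<And>i. i \<in> I \<Longrightarrow> Y i \<in> M \<rightarrow>\<^sub>M N"
  shows "subalgebra M (gen_sigma M N Y I)"
  unfolding subalgebra_def sets_gen_sigma space_gen_sigma
  using assms by (auto intro!: sets.sigma_sets_subset measurable_sets)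

lemma measurable_gen_sigma:
  assumes "i \<in> I" "Y i \<in> M \<rightarrow>\<^sub>M N"
  shows "Y i \<in> gen_sigma M N Y I \<rightarrow>\<^sub>M N"
proof (rule measurableI)
  fix x assume "x \<in> space (gen_sigma M N Y I)"
  then show "Y i x \<in> space N" using measurable_space[OF assms(2)] by simp
next
  fix B assume "B \<in> sets N"
  then show "Y i -` B \<inter> space (gen_sigma M N Y I) \<in> sets (gen_sigma M N Y I)"
    unfolding sets_gen_sigma using assms(1) by (auto intro!: sigma_sets.Basic)
qed

lemma (in finite_measure) sigma_finite_subalgebra_gen_sigma:
  assumes "\<And>i. i \<in> I \<Longrightarrow> Y i \<in> M \<rightarrow>\<^sub>M N"
  shows "sigma_finite_subalgebra M (gen_sigma M N Y I)"
  by (intro finite_measure_subalgebra_is_sigma_finite finite_measure_subalgebra.intro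
      finite_measure_axioms)
     (simp add: finite_measure_subalgebra_axioms_def subalgebra_gen_sigma[OF assms])

lemma sets_Collect_finite_preimages:
  assumes "finite J" "\<And>i. i \<in> J \<Longrightarrow> Y i \<in> M \<rightarrow>\<^sub>M N" "\<And>i. i \<in> J \<Longrightarrow> a i \<in> sets N"
  shows "{\<omega> \<in> space M. \<forall>i\<in>J. Y i \<omega> \<in> a i} \<in> sets M"
proof (rule sets.sets_Collect_finite_All[OF _ assms(1)])
  fix i assume i: "i \<in> J"
  have "{\<omega> \<in> space M. Y i \<omega> \<in> a i} = Y i -` a i \<inter> space M"
    by auto
  then show "{\<omega> \<in> space M. Y i \<omega> \<in> a i} \<in> sets M"
    using measurable_sets[OF assms(2)[OF i] assms(3)[OF i]] by simp
qed

definition cylinders :: "'b measure \<Rightarrow> 'c measure \<Rightarrow> (nat \<Rightarrow> 'b \<Rightarrow> 'c) \<Rightarrow> nat set \<Rightarrow> 'b set set" where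
  "cylinders M N Y J = {{\<omega> \<in> space M. \<forall>i\<in>J. Y i \<omega> \<in> a i} | a. \<forall>i. a i \<in> sets N}"

lemma Int_stable_cylinders: "Int_stable (cylinders M N Y J)"
  unfolding Int_stable_def cylinders_def
proof safe
  fix a b :: "nat \<Rightarrow> _" assume "\<forall>i. a i \<in> sets N" "\<forall>i. b i \<in> sets N"
  then show "\<exists>c. {\<omega> \<in> space M. \<forall>i\<in>J. Y i \<omega> \<in> a i} \<inter> {\<omega> \<in> space M. \<forall>i\<in>J. Y i \<omega> \<in> b i}
      = {\<omega> \<in> space M. \<forall>i\<in>J. Y i \<omega> \<in> c i} \<and> (\<forall>i. c i \<in> sets N)"
    by (intro exI[of _ "\<lambda>i. a i \<inter> b i"]) auto
qed

lemma cylinders_subset_sets: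
  assumes "finite J" "\<And>i. i \<in> J \<Longrightarrow> Y i \<in> M \<rightarrow>\<^sub>M N"
  shows "cylinders M N Y J \<subseteq> sets M"
proof
  fix E assume "E \<in> cylinders M N Y J"
  then obtain a where E: "E = {\<omega> \<in> space M. \<forall>i\<in>J. Y i \<omega> \<in> a i}" and a: "\<forall>i. a i \<in> sets N"
    unfolding cylinders_def by blast
  have "{\<omega> \<in> space M. \<forall>i\<in>J. Y i \<omega> \<in> a i} \<in> sets M"
    by (rule sets_Collect_finite_preimages[OF assms]) (use a in auto)
  then show "E \<in> sets M"
    by (simp add: E)
qed

lemma sets_gen_sigma_subset_cylinders:
  assumes "\<And>i. i \<in> J \<Longrightarrow> Y i \<in> M \<rightarrow>\<^sub>M N"
  shows "sets (gen_sigma M N Y J) \<subseteq> sigma_sets (space M) (cylinders M N Y J)"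
  unfolding sets_gen_sigma
proof (rule sigma_sets_mono', rule subsetI)
  fix E assume "E \<in> {Y i -` C \<inter> space M | i C. i \<in> J \<and> C \<in> sets N}"
  then obtain i C where E: "E = Y i -` C \<inter> space M" and "i \<in> J" "C \<in> sets N"
    by blast
  define a where "a l = (if l = i then C else space N)" for l
  have "Y l \<omega> \<in> space N" if "l \<in> J" "\<omega> \<in> space M" for l \<omega>
    using measurable_space[OF assms[OF that(1)] that(2)] .
  then have "E = {\<omega> \<in> space M. \<forall>l\<in>J. Y l \<omega> \<in> a l}"
    unfolding E a_def using \<open>i \<in> J\<close> by auto
  moreover have "\<forall>l. a l \<in> sets N"
    using \<open>C \<in> sets N\<close> by (simp add: a_def)
  ultimately show "E \<in> cylinders M N Y J"
    unfolding cylinders_def by blast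
qed

lemma (in finite_measure) measure_Int_eq_on_sigma_sets:
  assumes P: "Int_stable P" "P \<subseteq> sets M"
    and S: "S \<in> sets M" and T: "T \<in> sets M" and total: "measure M S = measure M T"
    and gen: "\<And>A. A \<in> P \<Longrightarrow> measure M (A \<inter> S) = measure M (A \<inter> T)"
    and A: "A \<in> sigma_sets (space M) P"
  shows "measure M (A \<inter> S) = measure M (A \<inter> T)"
proof -
  have P_sets: "sigma_sets (space M) P \<subseteq> sets M"
    by (rule sets.sigma_sets_subset[OF P(2)])
  have "P \<subseteq> Pow (space M)"
    using P(2) sets.sets_into_space by blast
  from P(1) this A show ?thesis
  proof (induction rule: sigma_sets_induct_disjoint)
    case (basic A)
    then show ?case by (rule gen)
  next
    case empty
    then show ?case by simp
  next
    case (compl A)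
    have "A \<in> sets M"
      using compl(1) P_sets by blast
    have "(space M - A) \<inter> U = U - A" if "U \<in> sets M" for U
      using that sets.sets_into_space by blast
    with compl(2) S T total \<open>A \<in> sets M\<close> show ?case
      by (simp add: finite_measure_Diff' Int_commute)
  next
    case (union A)
    have sums: "(\<lambda>i. measure M (A i \<inter> U)) sums measure M ((\<Union>i. A i) \<inter> U)" if "U \<in> sets M" for U
    proof -
      have "range (\<lambda>i. A i \<inter> U) \<subseteq> sets M"
        using union(2) P_sets that by blast
      then have "(\<lambda>i. measure M (A i \<inter> U)) sums measure M (\<Union>i. A i \<inter> U)"
        using union(1) by (intro finite_measure_UNION) (auto simp: disjoint_family_on_def)
      then show ?thesis
        by (simp add: Int_UN_distrib2)
    qed
    show ?case
      using sums[OF S] sums[OF T] union(3) by (simp add: sums_unique2)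
  qed
qed

lemma (in sigma_finite_subalgebra) real_cond_exp_comp_eq_if_measure_Int_eq:
  fixes f :: "'c \<Rightarrow> real"
  assumes "finite_measure M"
    and Y: "Y \<in> M \<rightarrow>\<^sub>M N" and Z: "Z \<in> M \<rightarrow>\<^sub>M N"
    and f: "f \<in> borel_measurable N" "bounded (range f)"
    and eq: "\<And>A B. A \<in> sets F \<Longrightarrow> B \<in> sets N \<Longrightarrow>
      measure M (A \<inter> (Y -` B \<inter> space M)) = measure M (A \<inter> (Z -` B \<inter> space M))"
  shows "AE \<omega> in M. real_cond_exp M F (\<lambda>\<omega>. f (Y \<omega>)) \<omega> = real_cond_exp M F (\<lambda>\<omega>. f (Z \<omega>)) \<omega>"
proof -
  interpret finite_measure M by fact
  obtain K where K: "\<And>x. norm (f x) \<le> K"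
    using f(2) unfolding bounded_iff by auto
  have integrable: "integrable M (\<lambda>\<omega>. f (W \<omega>))" if "W \<in> M \<rightarrow>\<^sub>M N" for W
    using that f(1) K by (intro integrable_const_bound[where B = K]) auto
  have set_integral_eq: "(\<integral>\<omega>\<in>A. f (Y \<omega>) \<partial>M) = (\<integral>\<omega>\<in>A. f (Z \<omega>) \<partial>M)" if A: "A \<in> sets F" for A
  proof -
    have "A \<in> sets M"
      using A subalg by (auto simp: subalgebra_def)
    then have A_space: "A \<inter> space M \<in> sets M" by simp
    have set_integral_distr: "(\<integral>\<omega>\<in>A. f (W \<omega>) \<partial>M) = integral\<^sup>L (distr (restrict_space M A) N W) f"
      if W: "W \<in> M \<rightarrow>\<^sub>M N" for W
      unfolding set_lebesgue_integral_def
      using W f(1) by (simp add: integral_distr measurable_restrict_space1 integral_restrict_space[OF A_space])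
    have emeasure_distr_restrict: "emeasure (distr (restrict_space M A) N W) B = measure M (A \<inter> (W -` B \<inter> space M))"
      if W: "W \<in> M \<rightarrow>\<^sub>M N" and B: "B \<in> sets N" for W B
    proof -
      have "emeasure (distr (restrict_space M A) N W) B
          = emeasure (restrict_space M A) (W -` B \<inter> (A \<inter> space M))"
        using W B by (simp add: emeasure_distr measurable_restrict_space1 space_restrict_space)
      also have "\<dots> = emeasure M (A \<inter> (W -` B \<inter> space M))"
        using A_space by (subst emeasure_restrict_space) (auto simp: Int_ac)
      finally show ?thesis
        by (simp add: emeasure_eq_measure)
    qed
    have "distr (restrict_space M A) N Y = distr (restrict_space M A) N Z"
      by (rule measure_eqI) (simp_all add: emeasure_distr_restrict Y Z eq[OF A])
    then show ?thesis
      by (simp add: set_integral_distr Y Z)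
  qed
  show ?thesis
    using set_integral_eq real_cond_exp_intA[OF integrable[OF Z]]
    by (intro real_cond_exp_charact) (auto intro: integrable Y Z)
qed

lemma (in sigma_finite_subalgebra) integral_mult_cond_exp_eq:
  fixes \<Phi> g h :: "'a \<Rightarrow> real"
  assumes "integrable M (\<lambda>\<omega>. \<Phi> \<omega> * g \<omega>)"
    and \<Phi>: "\<Phi> \<in> borel_measurable F" and "g \<in> borel_measurable M" and "h \<in> borel_measurable M"
    and cond_exp: "AE \<omega> in M. real_cond_exp M F g \<omega> = h \<omega>"
  shows "(\<integral>\<omega>. \<Phi> \<omega> * g \<omega> \<partial>M) = (\<integral>\<omega>. \<Phi> \<omega> * h \<omega> \<partial>M)"
proof -
  have [measurable]: "\<Phi> \<in> borel_measurable M"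
    by (rule measurable_from_subalg[OF subalg \<Phi>])
  have "(\<integral>\<omega>. \<Phi> \<omega> * g \<omega> \<partial>M) = (\<integral>\<omega>. \<Phi> \<omega> * real_cond_exp M F g \<omega> \<partial>M)"
    by (rule real_cond_exp_intg(2)[symmetric]) fact+
  also have "\<dots> = (\<integral>\<omega>. \<Phi> \<omega> * h \<omega> \<partial>M)"
    using cond_exp assms(4) by (intro integral_cong_AE) auto
  finally show ?thesis .
qed

locale martingale_mixture = prob_space M for M :: "'w measure" +
  fixes X :: "nat \<Rightarrow> 'w \<Rightarrow> 'a :: polish_space"
    and F :: "nat \<Rightarrow> 'w \<Rightarrow> 'a measure"
  assumes X_meas: "\<And>n. n \<ge> 1 \<Longrightarrow> X n \<in> M \<rightarrow>\<^sub>M borel"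
    and F_meas: "\<And>n. n \<ge> 1 \<Longrightarrow> F n \<in> M \<rightarrow>\<^sub>M prob_algebra borel"
    and cond_indep: "\<And>I A. finite I \<Longrightarrow> I \<subseteq> {1..} \<Longrightarrow> (\<And>i. i \<in> I \<Longrightarrow> A i \<in> sets borel) \<Longrightarrow>
        AE \<omega> in M. real_cond_exp M (gen_sigma M (prob_algebra borel) F {1..})
              (\<lambda>\<omega>. \<Prod>i\<in>I. indicator (A i) (X i \<omega>)) \<omega>
            = (\<Prod>i\<in>I. measure (F i \<omega>) (A i))"
    and mart: "\<And>n A. n \<ge> 1 \<Longrightarrow> A \<in> sets borel \<Longrightarrow>
        AE \<omega> in M. real_cond_exp M (gen_sigma M (prob_algebra borel) F {1..n})
              (\<lambda>\<omega>. measure (F (Suc n) \<omega>) A) \<omega> = measure (F n \<omega>) A"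
begin

abbreviation "\<F> J \<equiv> gen_sigma M (prob_algebra borel) F J"

lemma sigma_finite_subalgebra_\<F>: "J \<subseteq> {1..} \<Longrightarrow> sigma_finite_subalgebra M (\<F> J)"
  using F_meas by (intro sigma_finite_subalgebra_gen_sigma) auto

lemma measurable_measure_F:
  "A \<in> sets borel \<Longrightarrow> i \<in> J \<Longrightarrow> i \<ge> 1 \<Longrightarrow> (\<lambda>\<omega>. measure (F i \<omega>) A) \<in> borel_measurable (\<F> J)"
  by (rule measurable_compose[OF measurable_gen_sigma[OF _ F_meas] measurable_measure_prob_algebra])

lemma borel_measurable_measure_F:
  "A \<in> sets borel \<Longrightarrow> i \<ge> 1 \<Longrightarrow> (\<lambda>\<omega>. measure (F i \<omega>) A) \<in> borel_measurable M"
  by (rule measurable_compose[OF F_meas measurable_measure_prob_algebra])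

lemma measure_F_bounds:
  assumes "i \<ge> 1" "\<omega> \<in> space M"
  shows "0 \<le> measure (F i \<omega>) A" "measure (F i \<omega>) A \<le> 1"
proof -
  have "prob_space (F i \<omega>)"
    using measurable_space[OF F_meas[OF assms(1)] assms(2)] by (simp add: space_prob_algebra)
  then show "0 \<le> measure (F i \<omega>) A" "measure (F i \<omega>) A \<le> 1"
    by (simp_all add: prob_space.prob_le_1)
qed

lemma measure_cylinder_Int:
  assumes j: "n < j" and a: "\<And>i. a i \<in> sets borel" and B: "B \<in> sets borel"
  shows "measure M ({\<omega>\<in>space M. \<forall>i\<in>{1..n}. X i \<omega> \<in> a i} \<inter> (X j -` B \<inter> space M))
       = (\<integral>\<omega>. (\<Prod>i\<in>{1..n}. measure (F i \<omega>) (a i)) * measure (F j \<omega>) B \<partial>M)"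
proof -
  define I where "I = insert j {1..n}"
  define C where "C = a(j := B)"
  have I: "finite I" "I \<subseteq> {1..}" and j_notin: "j \<notin> {1..n}"
    using j by (auto simp: I_def)
  have C: "\<And>i. C i \<in> sets borel"
    using a B by (simp add: C_def)
  define S where "S = {\<omega>\<in>space M. \<forall>i\<in>I. X i \<omega> \<in> C i}"
  have S_eq: "{\<omega>\<in>space M. \<forall>i\<in>{1..n}. X i \<omega> \<in> a i} \<inter> (X j -` B \<inter> space M) = S"
  proof -
    have "\<forall>i\<in>{1..n}. C i = a i" "C j = B"
      using j_notin by (auto simp: C_def)
    then show ?thesis
      unfolding S_def I_def by auto
  qed
  have "S \<in> sets M"
    unfolding S_def using I C X_meas by (auto intro!: sets_Collect_finite_preimages)
  define h where "h \<omega> = (\<Prod>i\<in>I. indicator (C i) (X i \<omega>) :: real)" for \<omega>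
  have h_eq: "h \<omega> = indicator S \<omega>" if "\<omega> \<in> space M" for \<omega>
  proof (cases "\<forall>i\<in>I. X i \<omega> \<in> C i")
    case True
    then show ?thesis using that by (simp add: h_def S_def indicator_def)
  next
    case False
    then obtain i where "i \<in> I" "X i \<omega> \<notin> C i" by blast
    then have "h \<omega> = 0"
      unfolding h_def using I(1) by (intro prod_zero) (auto intro!: bexI[of _ i])
    then show ?thesis using False by (simp add: S_def indicator_def)
  qed
  have h_integrable: "integrable M h"
    using \<open>S \<in> sets M\<close> emeasure_finite[of S]
    by (subst Bochner_Integration.integrable_cong[OF refl h_eq])
       (auto intro!: integrable_real_indicator simp: less_top[symmetric])
  interpret \<F>: sigma_finite_subalgebra M "\<F> {1..}"
    by (rule sigma_finite_subalgebra_\<F>) simp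
  have "measure M S = (\<integral>\<omega>. indicator S \<omega> \<partial>M)"
    using \<open>S \<in> sets M\<close> by simp
  also have "\<dots> = (\<integral>\<omega>. h \<omega> \<partial>M)"
    by (rule Bochner_Integration.integral_cong) (simp_all add: h_eq)
  also have "\<dots> = (\<integral>\<omega>. real_cond_exp M (\<F> {1..}) h \<omega> \<partial>M)"
    by (rule \<F>.real_cond_exp_int(2)[OF h_integrable, symmetric])
  also have "\<dots> = (\<integral>\<omega>. (\<Prod>i\<in>I. measure (F i \<omega>) (C i)) \<partial>M)"
  proof (rule integral_cong_AE)
    show "AE \<omega> in M. real_cond_exp M (\<F> {1..}) h \<omega> = (\<Prod>i\<in>I. measure (F i \<omega>) (C i))"
      unfolding h_def using I C by (intro cond_indep) auto
    show "(\<lambda>\<omega>. \<Prod>i\<in>I. measure (F i \<omega>) (C i)) \<in> borel_measurable M"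
      using I C by (auto intro!: borel_measurable_prod borel_measurable_measure_F)
  qed simp
  also have "\<dots> = (\<integral>\<omega>. (\<Prod>i\<in>{1..n}. measure (F i \<omega>) (a i)) * measure (F j \<omega>) B \<partial>M)"
  proof (rule Bochner_Integration.integral_cong[OF refl])
    fix \<omega>
    have "(\<Prod>i\<in>{1..n}. measure (F i \<omega>) (C i)) = (\<Prod>i\<in>{1..n}. measure (F i \<omega>) (a i))"
      using j_notin by (intro prod.cong) (auto simp: C_def)
    with j_notin show "(\<Prod>i\<in>I. measure (F i \<omega>) (C i))
        = (\<Prod>i\<in>{1..n}. measure (F i \<omega>) (a i)) * measure (F j \<omega>) B"
      by (simp add: I_def mult.commute) (simp add: C_def)
  qed
  finally show ?thesis
    unfolding S_eq .
qed

lemma integral_mult_measure_F_shift: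
  assumes m: "m \<ge> 1" and \<Phi>: "\<And>m'. m \<le> m' \<Longrightarrow> \<Phi> \<in> borel_measurable (\<F> {1..m'})"
    and \<Phi>_bound: "\<And>\<omega>. \<omega> \<in> space M \<Longrightarrow> \<bar>\<Phi> \<omega>\<bar> \<le> 1" and B: "B \<in> sets borel"
  shows "(\<integral>\<omega>. \<Phi> \<omega> * measure (F (m + t) \<omega>) B \<partial>M) = (\<integral>\<omega>. \<Phi> \<omega> * measure (F m \<omega>) B \<partial>M)"
proof (induction t)
  case (Suc t)
  interpret \<F>: sigma_finite_subalgebra M "\<F> {1..m + t}"
    by (rule sigma_finite_subalgebra_\<F>) auto
  have \<Phi>_m_t: "\<Phi> \<in> borel_measurable (\<F> {1..m + t})"
    by (rule \<Phi>) simp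
  have "\<Phi> \<in> borel_measurable M"
    by (rule measurable_from_subalg[OF \<F>.subalg \<Phi>_m_t])
  moreover have "(\<lambda>\<omega>. measure (F (Suc (m + t)) \<omega>) B) \<in> borel_measurable M"
    using B by (intro borel_measurable_measure_F) auto
  moreover have "norm (\<Phi> \<omega> * measure (F (Suc (m + t)) \<omega>) B) \<le> 1" if "\<omega> \<in> space M" for \<omega>
    using \<Phi>_bound[OF that] measure_F_bounds[of "Suc (m + t)" \<omega> B] that
    by (simp add: abs_mult mult_le_one)
  ultimately have "integrable M (\<lambda>\<omega>. \<Phi> \<omega> * measure (F (Suc (m + t)) \<omega>) B)"
    by (intro integrable_const_bound[where B = 1]) auto
  then have "(\<integral>\<omega>. \<Phi> \<omega> * measure (F (Suc (m + t)) \<omega>) B \<partial>M)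
      = (\<integral>\<omega>. \<Phi> \<omega> * measure (F (m + t) \<omega>) B \<partial>M)"
  proof (rule \<F>.integral_mult_cond_exp_eq[OF _ \<Phi>_m_t])
    show "AE \<omega> in M. real_cond_exp M (\<F> {1..m + t}) (\<lambda>\<omega>. measure (F (Suc (m + t)) \<omega>) B) \<omega>
        = measure (F (m + t) \<omega>) B"
      using m B by (intro mart) auto
  qed (use m B in \<open>auto intro: borel_measurable_measure_F\<close>)
  with Suc show ?case
    by simp
qed simp

lemma measure_cylinder_Int_shift:
  assumes k: "k \<ge> 1" and a: "\<And>i. a i \<in> sets borel" and B: "B \<in> sets borel"
  shows "measure M ({\<omega>\<in>space M. \<forall>i\<in>{1..n}. X i \<omega> \<in> a i} \<inter> (X (n + k) -` B \<inter> space M))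
       = measure M ({\<omega>\<in>space M. \<forall>i\<in>{1..n}. X i \<omega> \<in> a i} \<inter> (X (n + 1) -` B \<inter> space M))"
proof -
  define \<Phi> where "\<Phi> \<omega> = (\<Prod>i\<in>{1..n}. measure (F i \<omega>) (a i))" for \<omega>
  have \<Phi>_measurable: "\<Phi> \<in> borel_measurable (\<F> {1..m})" if "n + 1 \<le> m" for m
    unfolding \<Phi>_def using that a by (auto intro!: borel_measurable_prod measurable_measure_F)
  have \<Phi>_bound: "\<bar>\<Phi> \<omega>\<bar> \<le> 1" if "\<omega> \<in> space M" for \<omega>
  proof -
    have "0 \<le> \<Phi> \<omega>" "\<Phi> \<omega> \<le> 1"
      unfolding \<Phi>_def using measure_F_bounds that by (auto intro!: prod_nonneg prod_le_1)
    then show ?thesis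
      by simp
  qed
  have "measure M ({\<omega>\<in>space M. \<forall>i\<in>{1..n}. X i \<omega> \<in> a i} \<inter> (X (n + k) -` B \<inter> space M))
      = (\<integral>\<omega>. \<Phi> \<omega> * measure (F (n + 1 + (k - 1)) \<omega>) B \<partial>M)"
    using measure_cylinder_Int[of n "n + k" a B] k a B by (simp add: \<Phi>_def)
  also have "\<dots> = (\<integral>\<omega>. \<Phi> \<omega> * measure (F (n + 1) \<omega>) B \<partial>M)"
    by (rule integral_mult_measure_F_shift[OF _ \<Phi>_measurable \<Phi>_bound B]) auto
  also have "\<dots> = measure M ({\<omega>\<in>space M. \<forall>i\<in>{1..n}. X i \<omega> \<in> a i} \<inter> (X (n + 1) -` B \<inter> space M))"
    using measure_cylinder_Int[of n "n + 1" a B] a B by (simp add: \<Phi>_def)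
  finally show ?thesis .
qed

lemma measure_Int_shift:
  assumes k: "k \<ge> 1" and A: "A \<in> sets (gen_sigma M borel X {1..n})" and B: "B \<in> sets borel"
  shows "measure M (A \<inter> (X (n + k) -` B \<inter> space M)) = measure M (A \<inter> (X (n + 1) -` B \<inter> space M))"
proof (rule measure_Int_eq_on_sigma_sets[where P = "cylinders M borel X {1..n}"])
  show "Int_stable (cylinders M borel X {1..n})"
    by (rule Int_stable_cylinders)
  show "cylinders M borel X {1..n} \<subseteq> sets M"
    using X_meas by (intro cylinders_subset_sets) auto
  show "X (n + k) -` B \<inter> space M \<in> sets M" "X (n + 1) -` B \<inter> space M \<in> sets M"
    using k B X_meas by (auto intro: measurable_sets)
  show "measure M (C \<inter> (X (n + k) -` B \<inter> space M)) = measure M (C \<inter> (X (n + 1) -` B \<inter> space M))"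
    if "C \<in> cylinders M borel X {1..n}" for C
    using that measure_cylinder_Int_shift[OF k _ B] unfolding cylinders_def by auto
  show "measure M (X (n + k) -` B \<inter> space M) = measure M (X (n + 1) -` B \<inter> space M)"
    using measure_cylinder_Int_shift[OF k _ B, of "\<lambda>_. UNIV"] by (simp add: Int_absorb1)
  show "A \<in> sigma_sets (space M) (cylinders M borel X {1..n})"
    using A sets_gen_sigma_subset_cylinders[of "{1..n}" X M borel] X_meas by auto
qed

theorem real_cond_exp_shift:
  fixes f :: "'a \<Rightarrow> real"
  assumes "k \<ge> 1" "f \<in> borel_measurable borel" "bounded (range f)"
  shows "AE \<omega> in M. real_cond_exp M (gen_sigma M borel X {1..n}) (\<lambda>\<omega>. f (X (n + k) \<omega>)) \<omega>
                 = real_cond_exp M (gen_sigma M borel X {1..n}) (\<lambda>\<omega>. f (X (n + 1) \<omega>)) \<omega>"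
proof -
  interpret X: sigma_finite_subalgebra M "gen_sigma M borel X {1..n}"
    using X_meas by (intro sigma_finite_subalgebra_gen_sigma) auto
  show ?thesis
  proof (rule X.real_cond_exp_comp_eq_if_measure_Int_eq
      [where N = borel and f = f and Y = "X (n + k)" and Z = "X (n + 1)"])
    show "X (n + k) \<in> M \<rightarrow>\<^sub>M borel" "X (n + 1) \<in> M \<rightarrow>\<^sub>M borel"
      using assms(1) by (auto intro: X_meas)
    show "measure M (A \<inter> (X (n + k) -` B \<inter> space M)) = measure M (A \<inter> (X (n + 1) -` B \<inter> space M))"
      if "A \<in> sets (gen_sigma M borel X {1..n})" "B \<in> sets borel" for A B
      using measure_Int_shift[OF assms(1)] that .
  qed (fact finite_measure_axioms assms)+
qed

end

theorem mainTheorem1: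
  fixes M :: "'w measure"
    and X :: "nat \<Rightarrow> 'w \<Rightarrow> 'a :: polish_space"
    and F :: "nat \<Rightarrow> 'w \<Rightarrow> 'a measure"
  assumes "prob_space M"
    and X_meas: "\<And>n. n \<ge> 1 \<Longrightarrow> X n \<in> M \<rightarrow>\<^sub>M borel"
    and F_meas: "\<And>n. n \<ge> 1 \<Longrightarrow> F n \<in> M \<rightarrow>\<^sub>M prob_algebra borel"
    and cond_indep: "\<And>I A. finite I \<Longrightarrow> I \<subseteq> {1..} \<Longrightarrow> (\<And>i. i \<in> I \<Longrightarrow> A i \<in> sets borel) \<Longrightarrow>
        AE \<omega> in M. real_cond_exp M (gen_sigma M (prob_algebra borel) F {1..})
              (\<lambda>\<omega>. \<Prod>i\<in>I. indicator (A i) (X i \<omega>)) \<omega>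
            = (\<Prod>i\<in>I. measure (F i \<omega>) (A i))"
    and mart: "\<And>n A. n \<ge> 1 \<Longrightarrow> A \<in> sets borel \<Longrightarrow>
        AE \<omega> in M. real_cond_exp M (gen_sigma M (prob_algebra borel) F {1..n})
              (\<lambda>\<omega>. measure (F (Suc n) \<omega>) A) \<omega> = measure (F n \<omega>) A"
  shows "\<forall>n k (f :: 'a \<Rightarrow> real). k \<ge> 1 \<longrightarrow> f \<in> borel_measurable borel \<longrightarrow> bounded (range f) \<longrightarrow>
      (AE \<omega> in M. real_cond_exp M (gen_sigma M borel X {1..n}) (\<lambda>\<omega>. f (X (n + k) \<omega>)) \<omega>
                 = real_cond_exp M (gen_sigma M borel X {1..n}) (\<lambda>\<omega>. f (X (n + 1) \<omega>)) \<omega>)"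
proof -
  interpret martingale_mixture M X F
    by (intro martingale_mixture.intro martingale_mixture_axioms.intro) fact+
  show ?thesis
    by (intro allI impI real_cond_exp_shift)
qed

end
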